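(* Let $\ket\psi$ be an $n$-qubit pure state and let $T\subseteq\mathbb F_2^{2n}$ be a subspace. Then \[\frac{1}{|T|}\sum_{a\in T}q_\psi(a) = \sum_{x\in T^\perp}p_\psi(x)^2.\]
   Context: For $x=(a,b)\in\mathbb F_2^{2n}$, $W_x = i^{a\cdot b}X^{a_1}Z^{b_1}\otimes\cdots\otimes X^{a_n}Z^{b_n}$ ($a\cdot b$ over the integers), $p_\psi(x)=2^{-n}\braket{\psi|W_x|\psi}^2$, and $q_\psi(x)=\sum_{y\in\mathbb F_2^{2n}}p_\psi(y)p_\psi(x+y)$. The symplectic product is $[x,y]=\sum_{j=1}^n(x_jy_{n+j}+x_{n+j}y_j)\bmod 2$, and $T^\perp=\{a:[x,a]=0\ \forall x\in T\}$. *)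

theory Defs
  imports Complex_Main
begin

text \<open>Qubits are indexed by a finite type 'n (so n = CARD('n)).
  Computational basis states are bitstrings 'n \<Rightarrow> bool.
  A point x = (a,b) of F_2^{2n} is a pair of bitstrings.\<close>

type_synonym 'n pauli_idx = "('n \<Rightarrow> bool) \<times> ('n \<Rightarrow> bool)"

definition f2_add :: "'n pauli_idx \<Rightarrow> 'n pauli_idx \<Rightarrow> 'n pauli_idx" where
  "f2_add x y = ((\<lambda>j. fst x j \<noteq> fst y j), (\<lambda>j. snd x j \<noteq> snd y j))"

definition f2_zero :: "'n pauli_idx" where
  "f2_zero = ((\<lambda>_. False), (\<lambda>_. False))"

definition is_subspace :: "'n pauli_idx set \<Rightarrow> bool" where
  "is_subspace T \<longleftrightarrow> f2_zero \<in> T \<and> (\<forall>x\<in>T. \<forall>y\<in>T. f2_add x y \<in> T)"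

definition sympl :: "'n::finite pauli_idx \<Rightarrow> 'n pauli_idx \<Rightarrow> nat" where
  "sympl x y = (card {j. fst x j \<and> snd y j} + card {j. snd x j \<and> fst y j}) mod 2"

definition sympl_perp :: "'n::finite pauli_idx set \<Rightarrow> 'n pauli_idx set" where
  "sympl_perp T = {a. \<forall>x\<in>T. sympl x a = 0}"

text \<open>Single-qubit matrices, as functions row \<Rightarrow> column \<Rightarrow> entry (basis |0>,|1> = False,True).\<close>
definition pI :: "bool \<Rightarrow> bool \<Rightarrow> complex" where
  "pI u v = (if u = v then 1 else 0)"
definition pX :: "bool \<Rightarrow> bool \<Rightarrow> complex" where
  "pX u v = (if u \<noteq> v then 1 else 0)"
definition pZ :: "bool \<Rightarrow> bool \<Rightarrow> complex" where
  "pZ u v = (if u = v then (if u then -1 else 1) else 0)"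

definition mmul2 :: "(bool \<Rightarrow> bool \<Rightarrow> complex) \<Rightarrow> (bool \<Rightarrow> bool \<Rightarrow> complex) \<Rightarrow> bool \<Rightarrow> bool \<Rightarrow> complex" where
  "mmul2 A B u v = (\<Sum>w\<in>UNIV. A u w * B w v)"

definition XZ :: "bool \<Rightarrow> bool \<Rightarrow> bool \<Rightarrow> bool \<Rightarrow> complex" where
  "XZ a b = mmul2 (if a then pX else pI) (if b then pZ else pI)"

text \<open>W_x = i^{a.b} X^{a_1}Z^{b_1} \<otimes> ... \<otimes> X^{a_n}Z^{b_n}; matrix entry <u|W_x|v>
  (tensor product entries are products of the factor entries).\<close>
definition weyl :: "'n::finite pauli_idx \<Rightarrow> ('n \<Rightarrow> bool) \<Rightarrow> ('n \<Rightarrow> bool) \<Rightarrow> complex" where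
  "weyl x u v = \<i> ^ card {j. fst x j \<and> snd x j} * (\<Prod>j\<in>UNIV. XZ (fst x j) (snd x j) (u j) (v j))"

definition expval :: "(('n::finite \<Rightarrow> bool) \<Rightarrow> ('n \<Rightarrow> bool) \<Rightarrow> complex) \<Rightarrow> (('n \<Rightarrow> bool) \<Rightarrow> complex) \<Rightarrow> complex" where
  "expval M psi = (\<Sum>u\<in>UNIV. \<Sum>v\<in>UNIV. cnj (psi u) * M u v * psi v)"

definition pure_state :: "(('n::finite \<Rightarrow> bool) \<Rightarrow> complex) \<Rightarrow> bool" where
  "pure_state psi \<longleftrightarrow> (\<Sum>u\<in>UNIV. (cmod (psi u))^2) = 1"

text \<open>p_psi(x) = 2^{-n} <psi|W_x|psi>^2 (a real number, kept in complex).\<close>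
definition p_psi :: "(('n::finite \<Rightarrow> bool) \<Rightarrow> complex) \<Rightarrow> 'n pauli_idx \<Rightarrow> complex" where
  "p_psi psi x = (expval (weyl x) psi)^2 / 2 ^ card (UNIV :: 'n set)"

definition q_psi :: "(('n::finite \<Rightarrow> bool) \<Rightarrow> complex) \<Rightarrow> 'n pauli_idx \<Rightarrow> complex" where
  "q_psi psi x = (\<Sum>y\<in>UNIV. p_psi psi y * p_psi psi (f2_add x y))"

end

theory Submission
  imports Defs "HOL-Library.Cardinality"
begin

text \<open>The characteristic distribution \<open>p\<^sub>\<psi>\<close> is, up to the factor \<open>2^n\<close>, its own
  symplectic Fourier transform: \<open>\<Sum>\<^sub>y (-1)^[x,y] p\<^sub>\<psi>(y) = 2^n p\<^sub>\<psi>(x)\<close>. This follows by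
  writing \<open>\<langle>\<psi>|W\<^sub>x|\<psi>\<rangle>\<^sup>2\<close> as a double sum over basis states and using the orthogonality
  of the characters \<open>(-1)^(u\<cdot>v)\<close> of \<open>F\<^sub>2\<^sup>n\<close>. Consequently the Fourier transform of the
  convolution \<open>q\<^sub>\<psi> = p\<^sub>\<psi> * p\<^sub>\<psi>\<close> is \<open>2^n p\<^sub>\<psi>\<^sup>2\<close>, i.e. \<open>q\<^sub>\<psi>(a) = \<Sum>\<^sub>x (-1)^[a,x] p\<^sub>\<psi>(x)\<^sup>2\<close>,
  and averaging the characters \<open>a \<mapsto> (-1)^[a,x]\<close> over the subspace \<open>T\<close> keeps exactly the
  terms with \<open>x \<in> T\<^sup>\<bottom>\<close>.\<close>

definition bits_add :: "('n \<Rightarrow> bool) \<Rightarrow> ('n \<Rightarrow> bool) \<Rightarrow> 'n \<Rightarrow> bool" where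
  "bits_add u v = (\<lambda>j. u j \<noteq> v j)"

definition chi :: "('n::finite \<Rightarrow> bool) \<Rightarrow> ('n \<Rightarrow> bool) \<Rightarrow> complex" where
  "chi u v = (-1) ^ card {j. u j \<and> v j}"

lemma bits_add_cancel [simp]:
  "bits_add (bits_add u v) v = u" "bits_add v (bits_add v u) = u"
  by (auto simp: bits_add_def fun_eq_iff)

lemma bits_add_commute: "bits_add u v = bits_add v u"
  by (auto simp: bits_add_def fun_eq_iff)

lemma sum_bits_add_shift: "(\<Sum>x\<in>UNIV. g (bits_add x c)) = (\<Sum>x\<in>UNIV. g x)"
  by (rule sum.reindex_bij_witness[where i="\<lambda>x. bits_add x c" and j="\<lambda>x. bits_add x c"]) auto

lemma chi_as_prod: "chi u v = (\<Prod>j\<in>UNIV. if u j \<and> v j then -1 else 1)"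
  unfolding chi_def by (simp add: prod.If_cases Collect_conj_eq)

lemma chi_commute: "chi u v = chi v u"
  unfolding chi_def by (simp add: conj_commute)

lemma chi_bits_add_left: "chi (bits_add u w) v = chi u v * chi w v"
  unfolding chi_as_prod prod.distrib[symmetric] by (rule prod.cong) (auto simp: bits_add_def)

lemma chi_bits_add_right: "chi v (bits_add u w) = chi v u * chi v w"
  using chi_bits_add_left chi_commute by metis

lemma chi_mult_self: "chi u v * chi u v = 1"
  unfolding chi_def by (simp flip: power_add add: mult_2[symmetric] power_mult)

lemma sum_chi:
  "(\<Sum>u\<in>UNIV. chi u d) = (if d = (\<lambda>_. False) then 2 ^ CARD('n) else 0)"
  for d :: "'n::finite \<Rightarrow> bool"
proof (cases "d = (\<lambda>_. False)")
  case True
  then have "(\<Sum>u\<in>UNIV. chi u d) = of_nat CARD('n \<Rightarrow> bool)"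
    by (simp add: chi_def)
  then show ?thesis
    using True by (simp add: card_fun)
next
  case False
  then obtain j where "d j" by auto
  then have flip: "chi (\<lambda>k. k = j) d = -1"
    unfolding chi_def by (simp add: Collect_conv_if)
  have "(\<Sum>u\<in>UNIV. chi u d) = (\<Sum>u\<in>UNIV. chi (bits_add u (\<lambda>k. k = j)) d)"
    by (rule sum_bits_add_shift[symmetric])
  also have "\<dots> = - (\<Sum>u\<in>UNIV. chi u d)"
    by (simp add: chi_bits_add_left flip sum_negf)
  finally show ?thesis
    using False by simp
qed

lemma chi_orthogonal:
  "(\<Sum>u\<in>UNIV. chi d u * chi u e) = (if e = d then 2 ^ CARD('n) else 0)"
  for d e :: "'n::finite \<Rightarrow> bool"
proof -
  have "chi d u * chi u e = chi u (bits_add d e)" for u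
    by (simp add: chi_bits_add_right chi_commute[of d])
  moreover have "(bits_add d e = (\<lambda>_. False)) = (e = d)"
    by (auto simp: bits_add_def fun_eq_iff)
  ultimately show ?thesis
    by (simp add: sum_chi)
qed

lemma XZ_eq: "XZ a b u v = (if u = (v \<noteq> a) then (if b \<and> v then -1 else 1) else 0)"
  unfolding XZ_def mmul2_def UNIV_bool
  by (cases a; cases b; cases u; cases v) (simp_all add: pX_def pI_def pZ_def)

lemma weyl_eq:
  "weyl (a, b) u v = \<i> ^ card {j. a j \<and> b j} * (if u = bits_add v a then chi b v else 0)"
proof (cases "u = bits_add v a")
  case True
  then have "XZ (a j) (b j) (u j) (v j) = (if b j \<and> v j then -1 else 1)" for j
    by (simp add: XZ_eq bits_add_def)
  then show ?thesis
    using True unfolding weyl_def chi_as_prod by simp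
next
  case False
  then obtain j where "u j \<noteq> (v j \<noteq> a j)"
    by (auto simp: bits_add_def fun_eq_iff)
  then have "XZ (a j) (b j) (u j) (v j) = 0"
    by (simp add: XZ_eq)
  then have "(\<Prod>j\<in>UNIV. XZ (a j) (b j) (u j) (v j)) = 0"
    by (meson UNIV_I finite prod_zero)
  then show ?thesis
    using False unfolding weyl_def by simp
qed

lemma expval_weyl:
  "expval (weyl (a, b)) psi =
     \<i> ^ card {j. a j \<and> b j} * (\<Sum>v\<in>UNIV. cnj (psi (bits_add v a)) * psi v * chi b v)"
proof -
  have "expval (weyl (a, b)) psi = (\<Sum>v\<in>UNIV. \<Sum>u\<in>UNIV. cnj (psi u) * weyl (a, b) u v * psi v)"
    unfolding expval_def by (rule sum.swap)
  also have "\<dots> = (\<Sum>v\<in>UNIV. \<i> ^ card {j. a j \<and> b j} * (cnj (psi (bits_add v a)) * psi v * chi b v))"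
    unfolding weyl_eq by (rule sum.cong) (auto simp: if_distrib if_distribR cong: if_cong)
  finally show ?thesis
    by (simp add: sum_distrib_left)
qed

lemma expval_weyl_sq:
  "(expval (weyl (a, b)) psi)\<^sup>2 =
     (\<Sum>v\<in>UNIV. \<Sum>w\<in>UNIV.
        cnj (psi (bits_add v a)) * psi v * cnj (psi w) * psi (bits_add w a) * chi b (bits_add v w))"
proof -
  define f where "f v = cnj (psi (bits_add v a)) * psi v" for v
  have phase: "(\<i> ^ card {j. a j \<and> b j})\<^sup>2 = chi a b"
    unfolding chi_def by (simp add: power_mult[symmetric] mult.commute[of _ 2])
  have "(\<Sum>v\<in>UNIV. f v * chi b v)\<^sup>2 = (\<Sum>v\<in>UNIV. \<Sum>w\<in>UNIV. f v * chi b v * (f w * chi b w))"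
    unfolding power2_eq_square by (rule sum_product)
  also have "\<dots> = (\<Sum>v\<in>UNIV. \<Sum>w\<in>UNIV.
                     f v * chi b v * (f (bits_add w a) * chi b (bits_add w a)))"
    by (rule sum.cong[OF refl], rule sum_bits_add_shift[symmetric])
  finally have "chi a b * (\<Sum>v\<in>UNIV. f v * chi b v)\<^sup>2 = (\<Sum>v\<in>UNIV. \<Sum>w\<in>UNIV.
      f v * f (bits_add w a) * chi b (bits_add v w) * (chi a b * chi a b))"
    by (simp add: sum_distrib_left chi_bits_add_right chi_commute[of b a] mult_ac)
  then show ?thesis
    unfolding expval_weyl power_mult_distrib phase f_def chi_mult_self by (simp add: mult.assoc)
qed

lemma expval_weyl_sq_sum_snd:
  "(\<Sum>b\<in>UNIV. chi d b * (expval (weyl (a, b)) psi)\<^sup>2) =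
     2 ^ CARD('n) * (\<Sum>v\<in>UNIV. cnj (psi (bits_add v a)) * psi v *
                       cnj (psi (bits_add v d)) * psi (bits_add (bits_add v d) a))"
  for a d :: "'n::finite \<Rightarrow> bool"
proof -
  define g where "g v w = cnj (psi (bits_add v a)) * psi v * cnj (psi w) * psi (bits_add w a)"
    for v w
  have "(\<Sum>b\<in>UNIV. chi d b * (expval (weyl (a, b)) psi)\<^sup>2) =
          (\<Sum>b\<in>UNIV. \<Sum>v\<in>UNIV. \<Sum>w\<in>UNIV. g v w * (chi d b * chi b (bits_add v w)))"
    unfolding expval_weyl_sq g_def by (simp add: sum_distrib_left mult_ac)
  also have "\<dots> = (\<Sum>v\<in>UNIV. \<Sum>w\<in>UNIV. \<Sum>b\<in>UNIV. g v w * (chi d b * chi b (bits_add v w)))"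
    by (subst sum.swap) (rule sum.cong[OF refl], rule sum.swap)
  also have "\<dots> = (\<Sum>v\<in>UNIV. \<Sum>w\<in>UNIV. g v w * (if bits_add v w = d then 2 ^ CARD('n) else 0))"
    by (simp add: sum_distrib_left[symmetric] chi_orthogonal)
  also have "\<dots> = 2 ^ CARD('n) * (\<Sum>v\<in>UNIV. g v (bits_add v d))"
  proof -
    have "(bits_add v w = d) = (w = bits_add v d)" for v w
      by (auto simp: bits_add_def fun_eq_iff)
    then show ?thesis
      by (simp add: if_distrib sum_distrib_left mult_ac cong: if_cong)
  qed
  finally show ?thesis
    unfolding g_def .
qed

text \<open>After the sum over \<open>b\<close>, substituting \<open>a = v + w\<close> turns the remaining sum back into
  the double sum of \<open>expval_weyl_sq\<close> at \<open>(d,c)\<close>.\<close>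

lemma expval_weyl_sq_fourier:
  "(\<Sum>a\<in>UNIV. \<Sum>b\<in>UNIV. chi c a * chi d b * (expval (weyl (a, b)) psi)\<^sup>2) =
     2 ^ CARD('n) * (expval (weyl (d, c)) psi)\<^sup>2"
  for c d :: "'n::finite \<Rightarrow> bool"
proof -
  define N :: complex where "N = 2 ^ CARD('n)"
  define h where "h a v = chi c a * (cnj (psi (bits_add v a)) * psi v *
                    cnj (psi (bits_add v d)) * psi (bits_add (bits_add v d) a))" for a v
  have "(\<Sum>a\<in>UNIV. \<Sum>b\<in>UNIV. chi c a * chi d b * (expval (weyl (a, b)) psi)\<^sup>2) =
          (\<Sum>a\<in>UNIV. chi c a * (\<Sum>b\<in>UNIV. chi d b * (expval (weyl (a, b)) psi)\<^sup>2))"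
    by (simp add: sum_distrib_left mult.assoc)
  also have "\<dots> = N * (\<Sum>v\<in>UNIV. \<Sum>a\<in>UNIV. h a v)"
    unfolding expval_weyl_sq_sum_snd h_def N_def
    by (subst sum.swap) (simp add: sum_distrib_left mult.left_commute)
  also have "\<dots> = N * (\<Sum>v\<in>UNIV. \<Sum>w\<in>UNIV. h (bits_add w v) v)"
    by (rule arg_cong[where f="(*) N"], rule sum.cong[OF refl], rule sum_bits_add_shift[symmetric])
  also have "\<dots> = N * (expval (weyl (d, c)) psi)\<^sup>2"
  proof -
    have "h (bits_add w v) v =
            cnj (psi (bits_add v d)) * psi v * cnj (psi w) * psi (bits_add w d) * chi c (bits_add v w)"
      for v w
    proof -
      have "bits_add v (bits_add w v) = w"
        and "bits_add (bits_add v d) (bits_add w v) = bits_add w d"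
        by (auto simp: bits_add_def fun_eq_iff)
      then show ?thesis
        unfolding h_def by (simp add: bits_add_commute[of w v] mult_ac)
    qed
    then show ?thesis
      unfolding expval_weyl_sq by simp
  qed
  finally show ?thesis
    unfolding N_def .
qed

lemma sympl_sign: "(-1::complex) ^ sympl x y = chi (fst x) (snd y) * chi (snd x) (fst y)"
proof -
  have "(-1::complex) ^ (m mod 2) = (-1) ^ m" for m :: nat
    by (simp add: minus_one_power_iff)
  then show ?thesis
    unfolding sympl_def chi_def by (simp add: power_add)
qed

lemma sympl_commute: "sympl x y = sympl y x"
  unfolding sympl_def by (simp add: conj_commute add.commute)

lemma sympl_sign_f2_add:
  "(-1::complex) ^ sympl (f2_add x y) z = (-1) ^ sympl x z * (-1) ^ sympl y z"
proof -
  have "fst (f2_add x y) = bits_add (fst x) (fst y)" "snd (f2_add x y) = bits_add (snd x) (snd y)"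
    by (simp_all add: f2_add_def bits_add_def)
  then show ?thesis
    unfolding sympl_sign by (simp add: chi_bits_add_left mult_ac)
qed

lemma p_psi_symplectic_fourier:
  "(\<Sum>y\<in>UNIV. (-1) ^ sympl x y * p_psi psi y) = 2 ^ CARD('n) * p_psi psi x"
  for x :: "'n::finite pauli_idx"
proof -
  obtain c d where x: "x = (d, c)"
    by fastforce
  have "(\<Sum>y\<in>UNIV. (-1) ^ sympl x y * p_psi psi y) =
          (\<Sum>a\<in>UNIV. \<Sum>b\<in>UNIV. (-1) ^ sympl x (a, b) * p_psi psi (a, b))"
    by (simp add: sum.cartesian_product)
  also have "\<dots> =
      (\<Sum>a\<in>UNIV. \<Sum>b\<in>UNIV. chi c a * chi d b * (expval (weyl (a, b)) psi)\<^sup>2) / 2 ^ CARD('n)"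
    by (simp add: x sympl_sign p_psi_def sum_divide_distrib mult_ac)
  finally show ?thesis
    by (simp add: expval_weyl_sq_fourier p_psi_def x)
qed

lemma q_psi_eq_fourier:
  "q_psi psi a = (\<Sum>x\<in>UNIV. (-1) ^ sympl a x * (p_psi psi x)\<^sup>2)"
  for a :: "'n::finite pauli_idx"
proof -
  define N :: complex where "N = 2 ^ CARD('n)"
  have "N \<noteq> 0"
    unfolding N_def by simp
  then have inversion: "p_psi psi z = (\<Sum>x\<in>UNIV. (-1) ^ sympl z x * p_psi psi x) / N" for z
    by (simp add: p_psi_symplectic_fourier N_def)
  have fourier: "(\<Sum>y\<in>UNIV. (-1) ^ sympl y x * p_psi psi y) = N * p_psi psi x" for x
    by (simp add: sympl_commute[of _ x] p_psi_symplectic_fourier N_def)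
  have "q_psi psi a =
          (\<Sum>y\<in>UNIV. \<Sum>x\<in>UNIV. p_psi psi y * ((-1) ^ sympl a x * (-1) ^ sympl y x * p_psi psi x) / N)"
    unfolding q_psi_def
    by (subst (2) inversion) (simp add: sympl_sign_f2_add sum_distrib_left sum_divide_distrib)
  also have "\<dots> = (\<Sum>x\<in>UNIV. (-1) ^ sympl a x * p_psi psi x *
                     (\<Sum>y\<in>UNIV. (-1) ^ sympl y x * p_psi psi y) / N)"
    by (subst sum.swap) (simp add: sum_distrib_left sum_divide_distrib mult_ac)
  also have "\<dots> = (\<Sum>x\<in>UNIV. (-1) ^ sympl a x * (p_psi psi x)\<^sup>2)"
    using \<open>N \<noteq> 0\<close> unfolding fourier by (simp add: power2_eq_square)
  finally show ?thesis .
qed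

lemma sum_subspace_sympl_sign:
  assumes "is_subspace T"
  shows "(\<Sum>a\<in>T. (-1::complex) ^ sympl a x) = (if x \<in> sympl_perp T then of_nat (card T) else 0)"
proof (cases "x \<in> sympl_perp T")
  case True
  then show ?thesis
    by (simp add: sympl_perp_def)
next
  case False
  then obtain a0 where a0: "a0 \<in> T" "sympl a0 x = 1"
    unfolding sympl_perp_def sympl_def by auto
  have closed: "f2_add a a0 \<in> T" if "a \<in> T" for a
    using assms that a0(1) unfolding is_subspace_def by blast
  have involution: "f2_add (f2_add a a0) a0 = a" for a :: "'a pauli_idx"
    by (auto simp: f2_add_def prod_eq_iff fun_eq_iff)
  have "(\<Sum>a\<in>T. (-1::complex) ^ sympl a x) = (\<Sum>a\<in>T. (-1::complex) ^ sympl (f2_add a a0) x)"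
    by (rule sum.reindex_bij_witness[where i="\<lambda>a. f2_add a a0" and j="\<lambda>a. f2_add a a0"])
       (auto simp: involution closed)
  also have "\<dots> = - (\<Sum>a\<in>T. (-1::complex) ^ sympl a x)"
    by (simp add: sympl_sign_f2_add a0(2) sum_negf)
  finally show ?thesis
    using False by simp
qed

theorem theorem3p2:
  fixes psi :: "('n::finite \<Rightarrow> bool) \<Rightarrow> complex"
    and T :: "'n pauli_idx set"
  assumes "pure_state psi"
    and "is_subspace T"
  shows "(\<Sum>a\<in>T. q_psi psi a) / of_nat (card T) = (\<Sum>x\<in>sympl_perp T. (p_psi psi x)^2)"
proof -
  have "(\<Sum>a\<in>T. q_psi psi a) = (\<Sum>x\<in>UNIV. (\<Sum>a\<in>T. (-1) ^ sympl a x) * (p_psi psi x)\<^sup>2)"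
    unfolding q_psi_eq_fourier by (subst sum.swap) (simp add: sum_distrib_right)
  also have "\<dots> = (\<Sum>x\<in>UNIV. if x \<in> sympl_perp T then of_nat (card T) * (p_psi psi x)\<^sup>2 else 0)"
    by (intro sum.cong refl) (simp add: sum_subspace_sympl_sign[OF assms(2)])
  also have "\<dots> = of_nat (card T) * (\<Sum>x\<in>sympl_perp T. (p_psi psi x)\<^sup>2)"
    by (simp add: sum.If_cases sum_distrib_left)
  finally have "(\<Sum>a\<in>T. q_psi psi a) = of_nat (card T) * (\<Sum>x\<in>sympl_perp T. (p_psi psi x)\<^sup>2)" .
  moreover have "card T \<noteq> 0"
    using assms(2) unfolding is_subspace_def by (auto simp: card_eq_0_iff)
  ultimately show ?thesis
    by simp
qed

end
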